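(* Let $N\ge2$ be even. For every $s\in(1,m^*_N]$ there exists $\theta_s\in\mathcal G$ with $\langle M_N(\theta_s)\rangle=s$.
   Context: $\mathcal G=(\pi/4,\pi/2)\cup(\pi/2,3\pi/4)\cup(5\pi/4,3\pi/2)\cup(3\pi/2,7\pi/4)$. For $\bm x\in\{0,1\}^N$ let $|\bm x|=\sum_kx_k$ and $c_{\bm x}=\cos\big[\frac\pi2\big(\frac{N-1}2-|\bm x|\big)\big]$. The MABK value of the strategy with state $(|0\rangle^{\otimes N}+i|1\rangle^{\otimes N})/\sqrt2$ and observables $A^{(k)}_0=\sigma_X$, $A^{(k)}_1=\cos\theta\sigma_X+\sin\theta\sigma_Y$ for all $k$ is $\langle M_N(\theta)\rangle:=2^{(1-N)/2}\sum_{\bm x\in\{0,1\}^N}c_{\bm x}\sin(|\bm x|\theta)$ (since the full correlator of this strategy at input $\bm x$ is $\sin(|\bm x|\theta)$); equivalently $\langle M_N(\theta)\rangle=2^{\frac{N-1}2}\big(\cos^N(\theta/2+\pi/4)\sin(N\theta/2+\pi/4)+\cos^N(\theta/2-\pi/4)\sin(N\theta/2-\pi/4)\big)$. $m^*_N:=\langle M_N(\theta^*_N)\rangle$ with $\theta^*_N=2\pi t_N/(N+1)$, where $t_N=N/4+1/2,\ N/4,\ 3N/4+1/2,\ 3N/4+1$ according as $N\equiv2,4,6,0\pmod 8$. *)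

theory Defs
  imports "HOL-Analysis.Analysis"
begin

definition G_set :: "real set" where
  "G_set = {pi/4<..<pi/2} \<union> {pi/2<..<3*pi/4} \<union> {5*pi/4<..<3*pi/2} \<union> {3*pi/2<..<7*pi/4}"

definition bitstrings :: "nat \<Rightarrow> (nat \<Rightarrow> nat) set" where
  "bitstrings N = {..<N} \<rightarrow>\<^sub>E {0, 1}"

definition weight :: "nat \<Rightarrow> (nat \<Rightarrow> nat) \<Rightarrow> nat" where
  "weight N x = (\<Sum>k<N. x k)"

definition c_coef :: "nat \<Rightarrow> (nat \<Rightarrow> nat) \<Rightarrow> real" where
  "c_coef N x = cos (pi / 2 * ((real N - 1) / 2 - real (weight N x)))"

definition MABK :: "nat \<Rightarrow> real \<Rightarrow> real" where
  "MABK N \<theta> = 2 powr ((1 - real N) / 2) *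
     (\<Sum>x\<in>bitstrings N. c_coef N x * sin (real (weight N x) * \<theta>))"

definition t_N :: "nat \<Rightarrow> real" where
  "t_N N = (if N mod 8 = 2 then real N / 4 + 1/2
            else if N mod 8 = 4 then real N / 4
            else if N mod 8 = 6 then 3 * real N / 4 + 1/2
            else 3 * real N / 4 + 1)"

definition theta_star :: "nat \<Rightarrow> real" where
  "theta_star N = 2 * pi * t_N N / (real N + 1)"

definition m_star :: "nat \<Rightarrow> real" where
  "m_star N = MABK N (theta_star N)"

end

theory Submission
  imports Defs
begin

text \<open>
  Writing \<open>c\<^sub>x\<close> through two exponentials turns the sum over bit strings into the binomial
  generating function \<open>(1 + z)\<^sup>N\<close> at \<open>z = cis (\<theta> \<plusminus> \<pi>/2)\<close>, which yields the closed form.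
  At the grid points \<open>\<theta> = 2k\<pi>/(N+1)\<close> with \<open>k\<close> even both sines of the closed form reduce to
  the cosines in front of them, so the value there is a positive multiple of
  \<open>cos (\<theta>/2 + \<pi>/4)\<^sup>N\<^sup>+\<^sup>1 - cos (\<theta>/2 - \<pi>/4)\<^sup>N\<^sup>+\<^sup>1 \<le> 0\<close>.
  Since \<open>t\<^sub>N\<close> is odd, \<open>\<theta>\<^sup>*\<^sub>N\<close> lies between two consecutive grid points, and for \<open>N > 8\<close> the one
  with even \<open>k\<close> lies in the component of \<open>G\<close> containing \<open>\<theta>\<^sup>*\<^sub>N\<close>; for \<open>N \<le> 8\<close> an endpoint of
  that component, where the value is computed explicitly, takes its place. The intermediate
  value theorem between that point and \<open>\<theta>\<^sup>*\<^sub>N\<close> reaches every level in \<open>(1, m\<^sup>*\<^sub>N]\<close>.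
\<close>

lemma sum_bitstrings_power_weight:
  "(\<Sum>x\<in>bitstrings N. (z::'a::comm_ring_1) ^ weight N x) = (1 + z) ^ N"
proof -
  have "(\<Sum>x\<in>bitstrings N. z ^ weight N x) = (\<Sum>x\<in>bitstrings N. \<Prod>k<N. z ^ x k)"
    unfolding weight_def by (simp add: power_sum)
  also have "\<dots> = (\<Prod>k<N. \<Sum>v\<in>{0,1::nat}. z ^ v)"
    unfolding bitstrings_def by (rule prod_sum_PiE[symmetric]) auto
  finally show ?thesis by (simp add: add.commute)
qed

lemma one_plus_cis: "1 + cis \<phi> = complex_of_real (2 * cos (\<phi> / 2)) * cis (\<phi> / 2)"
  using cos_double_cos[of "\<phi> / 2"] sin_double[of "\<phi> / 2"]
  by (simp add: complex_eq_iff power2_eq_square)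

lemma one_plus_cis_power:
  "(1 + cis \<phi>) ^ N = complex_of_real ((2 * cos (\<phi> / 2)) ^ N) * cis (N * \<phi> / 2)"
  unfolding one_plus_cis power_mult_distrib Complex.DeMoivre by (simp add: mult.commute)

lemma cos_mul_sin_eq_Im_cis:
  "cos (\<alpha> - real n * pi / 2) * sin (real n * \<theta>) =
     Im (cis \<alpha> * cis (\<theta> - pi / 2) ^ n + cis (- \<alpha>) * cis (\<theta> + pi / 2) ^ n) / 2"
  unfolding Complex.DeMoivre by (simp add: sin_add sin_diff cos_add cos_diff algebra_simps)

lemma Im_cis_mult_of_real: "Im (cis a * (complex_of_real r * cis b)) = r * sin (a + b)"
  by (simp add: sin_add algebra_simps)

lemma MABK_closed_form:
  "MABK N \<theta> = 2 powr ((real N - 1) / 2) *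
     (cos (\<theta> / 2 + pi / 4) ^ N * sin (N * \<theta> / 2 + pi / 4) +
      cos (\<theta> / 2 - pi / 4) ^ N * sin (N * \<theta> / 2 - pi / 4))"
proof -
  define \<alpha> where "\<alpha> = pi * (real N - 1) / 4"
  define z\<^sub>1 where "z\<^sub>1 = cis (\<theta> - pi / 2)"
  define z\<^sub>2 where "z\<^sub>2 = cis (\<theta> + pi / 2)"
  have "c_coef N x = cos (\<alpha> - real (weight N x) * pi / 2)" for x
    unfolding c_coef_def \<alpha>_def by (simp add: algebra_simps diff_divide_distrib)
  then have "(\<Sum>x\<in>bitstrings N. c_coef N x * sin (real (weight N x) * \<theta>))
      = Im (\<Sum>x\<in>bitstrings N. cis \<alpha> * z\<^sub>1 ^ weight N x + cis (- \<alpha>) * z\<^sub>2 ^ weight N x) / 2"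
    unfolding z\<^sub>1_def z\<^sub>2_def Im_sum by (simp add: cos_mul_sin_eq_Im_cis sum_divide_distrib)
  also have "\<dots> = Im (cis \<alpha> * (1 + z\<^sub>1) ^ N + cis (- \<alpha>) * (1 + z\<^sub>2) ^ N) / 2"
    by (simp add: sum.distrib flip: sum_distrib_left sum_bitstrings_power_weight)
  also have "\<dots> = ((2 * cos ((\<theta> - pi / 2) / 2)) ^ N * sin (\<alpha> + N * (\<theta> - pi / 2) / 2) +
                    (2 * cos ((\<theta> + pi / 2) / 2)) ^ N * sin (- \<alpha> + N * (\<theta> + pi / 2) / 2)) / 2"
    unfolding z\<^sub>1_def z\<^sub>2_def one_plus_cis_power by (simp only: plus_complex.sel Im_cis_mult_of_real)
  also have "(\<theta> - pi / 2) / 2 = \<theta> / 2 - pi / 4"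
    by simp
  also have "(\<theta> + pi / 2) / 2 = \<theta> / 2 + pi / 4"
    by simp
  also have "\<alpha> + N * (\<theta> - pi / 2) / 2 = N * \<theta> / 2 - pi / 4"
    unfolding \<alpha>_def by (simp add: field_simps)
  also have "- \<alpha> + N * (\<theta> + pi / 2) / 2 = N * \<theta> / 2 + pi / 4"
    unfolding \<alpha>_def by (simp add: field_simps)
  finally have sum_eq: "(\<Sum>x\<in>bitstrings N. c_coef N x * sin (real (weight N x) * \<theta>))
      = 2 ^ N / 2 * (cos (\<theta> / 2 + pi / 4) ^ N * sin (N * \<theta> / 2 + pi / 4) +
                    cos (\<theta> / 2 - pi / 4) ^ N * sin (N * \<theta> / 2 - pi / 4))"
    by (simp add: algebra_simps)
  have "(2::real) ^ N / 2 = 2 powr (real N - 1)"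
    by (simp add: powr_diff powr_realpow)
  then have "2 powr ((1 - real N) / 2) * (2 ^ N / 2) = (2::real) powr ((1 - real N) / 2 + (real N - 1))"
    by (simp add: powr_add)
  also have "(1 - real N) / 2 + (real N - 1) = (real N - 1) / 2"
    by (simp add: field_simps)
  finally have "2 powr ((1 - real N) / 2) * (2 ^ N / 2) = (2::real) powr ((real N - 1) / 2)" .
  then show ?thesis
    unfolding MABK_def sum_eq by (simp only: mult.assoc [symmetric])
qed

lemma continuous_on_MABK: "continuous_on A (MABK N)"
  unfolding MABK_def by (intro continuous_intros)

lemma sin_add_npi: "sin (x + real n * pi) = (- 1) ^ n * sin x"
  by (simp add: sin_add)

lemma cos_add_pi4_le_cos_diff_pi4:
  assumes "0 \<le> x" "x \<le> pi"
  shows "cos (x + pi / 4) \<le> cos (x - pi / 4)"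
proof -
  have "cos (x - pi / 4) - cos (x + pi / 4) = sqrt 2 * sin x"
    by (simp add: cos_add cos_diff sin_45 cos_45)
  moreover have "0 \<le> sqrt 2 * sin x"
    using sin_ge_zero[OF assms] by simp
  ultimately show ?thesis
    by linarith
qed

lemma MABK_grid_eq:
  fixes N k :: nat
  assumes "even k" "\<theta> = 2 * real k * pi / (real N + 1)"
  shows "MABK N \<theta> = 2 powr ((real N - 1) / 2) *
           (cos (\<theta> / 2 + pi / 4) ^ (N + 1) - cos (\<theta> / 2 - pi / 4) ^ (N + 1))"
proof -
  have N\<theta>: "N * \<theta> / 2 = k * pi - \<theta> / 2"
    using assms(2) by (simp add: field_simps)
  have "N * \<theta> / 2 + pi / 4 = (pi / 4 - \<theta> / 2) + k * pi"
    using N\<theta> by simp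
  then have "sin (N * \<theta> / 2 + pi / 4) = sin (pi / 4 - \<theta> / 2)"
    using \<open>even k\<close> by (simp only: sin_add_npi) simp
  also have "\<dots> = cos (\<theta> / 2 + pi / 4)"
    unfolding sin_cos_eq by (simp add: algebra_simps)
  finally have sin_plus: "sin (N * \<theta> / 2 + pi / 4) = cos (\<theta> / 2 + pi / 4)" .
  have "N * \<theta> / 2 - pi / 4 = - (\<theta> / 2 + pi / 4) + k * pi"
    using N\<theta> by simp
  then have "sin (N * \<theta> / 2 - pi / 4) = - sin (\<theta> / 2 + pi / 4)"
    using \<open>even k\<close> by (simp only: sin_add_npi sin_minus) simp
  also have "\<dots> = - cos (\<theta> / 2 - pi / 4)"
    unfolding sin_cos_eq by (simp add: cos_diff)
  finally have sin_minus: "sin (N * \<theta> / 2 - pi / 4) = - cos (\<theta> / 2 - pi / 4)" .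
  show ?thesis
    unfolding MABK_closed_form sin_plus sin_minus by (simp add: algebra_simps)
qed

lemma MABK_grid_nonpos:
  fixes N k :: nat
  assumes "even N" "even k" "k \<le> N + 1"
  shows "MABK N (2 * real k * pi / (real N + 1)) \<le> 0"
proof -
  define \<theta> where "\<theta> = 2 * real k * pi / (real N + 1)"
  have "\<theta> / 2 = pi * (k / (N + 1))"
    by (simp add: \<theta>_def field_simps)
  also have "\<dots> \<le> pi"
    using \<open>k \<le> N + 1\<close> by (intro mult_left_le) simp_all
  finally have "cos (\<theta> / 2 + pi / 4) \<le> cos (\<theta> / 2 - pi / 4)"
    by (intro cos_add_pi4_le_cos_diff_pi4) (simp_all add: \<theta>_def)
  then have "cos (\<theta> / 2 + pi / 4) ^ (N + 1) \<le> cos (\<theta> / 2 - pi / 4) ^ (N + 1)"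
    using \<open>even N\<close> by (intro power_mono_odd) simp_all
  then show ?thesis
    unfolding \<theta>_def[symmetric] MABK_grid_eq[OF \<open>even k\<close> \<theta>_def]
    by (simp add: mult_nonneg_nonpos)
qed

lemma cos_half_plus_pi4_sq: "cos (\<theta> / 2 + pi / 4) ^ 2 = (1 - sin \<theta>) / 2"
  using cos_double_cos[of "\<theta> / 2 + pi / 4"] by (simp add: cos_add algebra_simps)

lemma cos_half_minus_pi4_sq: "cos (\<theta> / 2 - pi / 4) ^ 2 = (1 + sin \<theta>) / 2"
  using cos_double_cos[of "\<theta> / 2 - pi / 4"] by (simp add: cos_diff algebra_simps)

lemma MABK_even_closed_form:
  "MABK (2 * n) \<theta> = 2 ^ n / sqrt 2 *
     (((1 - sin \<theta>) / 2) ^ n * sin (n * \<theta> + pi / 4) +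
      ((1 + sin \<theta>) / 2) ^ n * sin (n * \<theta> - pi / 4))"
proof -
  have "(real (2 * n) - 1) / 2 = real n - 1 / 2"
    by simp
  also have "(2::real) powr (real n - 1 / 2) = 2 ^ n / sqrt 2"
    by (simp add: powr_diff powr_realpow powr_half_sqrt)
  finally have exponent: "2 powr ((real (2 * n) - 1) / 2) = 2 ^ n / sqrt 2" .
  have arg: "real (2 * n) * \<theta> / 2 = n * \<theta>"
    by simp
  show ?thesis
    unfolding MABK_closed_form power_mult cos_half_plus_pi4_sq cos_half_minus_pi4_sq arg exponent ..
qed

lemma sin_odd_quarter_pi:
  "sin (real (4 * j + 1) * pi / 4) = (- 1) ^ j * sqrt 2 / 2"
  "sin (real (4 * j + 3) * pi / 4) = (- 1) ^ j * sqrt 2 / 2"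
proof -
  have "real (4 * j + 1) * pi / 4 = pi / 4 + real j * pi"
    and "real (4 * j + 3) * pi / 4 = (pi - pi / 4) + real j * pi"
    by (simp_all add: field_simps)
  then show "sin (real (4 * j + 1) * pi / 4) = (- 1) ^ j * sqrt 2 / 2"
    and "sin (real (4 * j + 3) * pi / 4) = (- 1) ^ j * sqrt 2 / 2"
    by (simp_all only: sin_add_npi sin_pi_minus sin_45)
qed

lemma MABK_2_pi_half: "MABK 2 (pi / 2) = 1"
  using MABK_even_closed_form[of 1 "pi / 2"] by (simp add: sin_45)

lemma MABK_4_pi_half: "MABK 4 (pi / 2) = 2"
proof -
  have "MABK 4 (pi / 2) = 4 / sqrt 2 * sin (3 * pi / 4)"
    using MABK_even_closed_form[of 2 "pi / 2"] by simp
  also have "sin (3 * pi / 4) = sqrt 2 / 2"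
    using sin_odd_quarter_pi(2)[of 0] by simp
  finally show ?thesis by simp
qed

lemma MABK_4_pi_quarter: "MABK 4 (pi / 4) = 3 / 2"
proof -
  define r :: real where "r = sqrt 2 / 2"
  have "MABK 4 (pi / 4) = 4 / sqrt 2 * (((1 - r) / 2)\<^sup>2 * sin (3 * pi / 4) + ((1 + r) / 2)\<^sup>2 * r)"
    using MABK_even_closed_form[of 2 "pi / 4"] by (simp add: r_def sin_45)
  also have "sin (3 * pi / 4) = r"
    using sin_odd_quarter_pi(2)[of 0] by (simp add: r_def)
  finally show ?thesis
    by (simp add: r_def power2_eq_square field_simps)
qed

lemma MABK_4_three_pi_quarters_nonpos: "MABK 4 (3 * pi / 4) \<le> 0"
proof -
  have "sin (5 * pi / 4) < 0" and "sin (7 * pi / 4) < 0"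
    using sin_odd_quarter_pi(1)[of 1] sin_odd_quarter_pi(2)[of 1] by simp_all
  then show ?thesis
    using MABK_even_closed_form[of 2 "3 * pi / 4"]
    by (simp add: divide_nonpos_pos add_nonpos_nonpos mult_nonneg_nonpos)
qed

lemma MABK_6_five_pi_quarters_nonpos: "MABK 6 (5 * pi / 4) \<le> 0"
proof -
  have "sin (7 * pi / 2) = - 1"
    using sin_cos_npi[of 3] by simp
  moreover have "0 \<le> 1 + sin (5 * pi / 4)"
    using sin_ge_minus_one[of "5 * pi / 4"] by linarith
  ultimately show ?thesis
    using MABK_even_closed_form[of 3 "5 * pi / 4"] by simp
qed

lemma MABK_8_seven_pi_quarters_nonpos: "MABK 8 (7 * pi / 4) \<le> 0"
proof -
  define r :: real where "r = sqrt 2 / 2"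
  have "sin (7 * pi / 4) = - r" and "sin (27 * pi / 4) = r" and "sin (29 * pi / 4) = - r"
    using sin_odd_quarter_pi(2)[of 1] sin_odd_quarter_pi(2)[of 6] sin_odd_quarter_pi(1)[of 7]
    by (simp_all add: r_def)
  then have "MABK 8 (7 * pi / 4) = 16 / sqrt 2 * r * (((1 - r) / 2) ^ 4 - ((1 + r) / 2) ^ 4)"
    using MABK_even_closed_form[of 4 "7 * pi / 4"] by (simp add: algebra_simps)
  moreover have "((1 - r) / 2) ^ 4 \<le> ((1 + r) / 2) ^ 4"
    unfolding r_def by (intro power_mono) (use sqrt2_less_2 in simp_all)
  ultimately show ?thesis
    by (simp add: r_def mult_nonneg_nonpos)
qed

lemma IVT'_closed_segment_strict:
  fixes f :: "real \<Rightarrow> real"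
  assumes "continuous_on (closed_segment a b) f" "f a < y" "y \<le> f b"
  obtains x where "x \<in> closed_segment a b" "x \<noteq> a" "f x = y"
proof -
  have "y \<in> closed_segment (f a) (f b)"
    using assms(2,3) by (simp add: closed_segment_eq_real_ivl)
  then obtain x where "x \<in> closed_segment a b" "f x = y"
    using IVT'_closed_segment_real assms(1) by blast
  with assms(2) show thesis
    by (intro that) auto
qed

lemma IVT'_open_interval:
  fixes f :: "real \<Rightarrow> real"
  assumes "continuous_on {c..d} f" "c < b" "b < d" "c \<le> a" "a \<le> d" "f a < y" "y \<le> f b"
  shows "\<exists>x\<in>{c<..<d}. f x = y"
proof -
  have "closed_segment a b \<subseteq> {c..d}"
    using assms(2-5) by (auto simp: closed_segment_eq_real_ivl)
  then obtain x where "x \<in> closed_segment a b" "x \<noteq> a" "f x = y"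
    using IVT'_closed_segment_strict continuous_on_subset assms(1,6,7) by metis
  moreover from this(1,2) have "x \<in> {c<..<d}"
    using assms(2-5) by (auto simp: closed_segment_eq_real_ivl split: if_splits)
  ultimately show ?thesis
    by blast
qed

lemma MABK_attains_near_theta_star:
  assumes "{c<..<d} \<subseteq> G_set" "c < theta_star N" "theta_star N < d" "c \<le> a" "a \<le> d"
    and "MABK N a < s" "s \<le> m_star N"
  shows "\<exists>\<theta>\<in>G_set. MABK N \<theta> = s"
  using IVT'_open_interval[OF continuous_on_MABK assms(2-6)] assms(1,7)
  unfolding m_star_def by blast

lemma G_set_components:
  "{pi / 4<..<pi / 2} \<subseteq> G_set" "{pi / 2<..<3 * pi / 4} \<subseteq> G_set"
  "{5 * pi / 4<..<3 * pi / 2} \<subseteq> G_set" "{3 * pi / 2<..<7 * pi / 4} \<subseteq> G_set"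
  by (auto simp: G_set_def)

text \<open>
  For \<open>N = 4\<close> the value at the endpoint \<open>\<pi>/4\<close> of the component containing \<open>\<theta>\<^sup>*\<^sub>4\<close> is
  only \<open>3/2\<close>, so the levels in \<open>(1, 3/2]\<close> are reached on the neighbouring component.
\<close>

lemma MABK_4_attains_in_G:
  assumes "0 < s" "s < 2"
  shows "\<exists>\<theta>\<in>G_set. MABK 4 \<theta> = s"
proof -
  have "MABK 4 (3 * pi / 4) < s" "s \<le> MABK 4 (pi / 2)"
    using assms MABK_4_three_pi_quarters_nonpos MABK_4_pi_half by simp_all
  then obtain x where x: "x \<in> closed_segment (3 * pi / 4) (pi / 2)" "x \<noteq> 3 * pi / 4" "MABK 4 x = s"
    by (rule IVT'_closed_segment_strict[OF continuous_on_MABK])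
  moreover have "x \<noteq> pi / 2"
    using x(3) assms(2) MABK_4_pi_half by (metis less_irrefl)
  ultimately have "x \<in> {pi / 2<..<3 * pi / 4}"
    by (auto simp: closed_segment_eq_real_ivl)
  with x(3) show ?thesis
    using G_set_components(2) by blast
qed

lemma MABK_attains_in_G_mod_8_eq_2:
  assumes "N mod 8 = 2" "1 < s" "s \<le> m_star N"
  shows "\<exists>\<theta>\<in>G_set. MABK N \<theta> = s"
proof -
  obtain m where N: "N = 8 * m + 2"
    using assms(1) by (metis mod_mult_div_eq add.commute)
  have \<theta>_star: "theta_star N = pi * (2 * (2 * m + 1) / (8 * m + 3))"
    using assms(1) by (simp add: theta_star_def t_N_def N field_simps)
  obtain a where "pi / 2 \<le> a" "a \<le> 3 * pi / 4" "MABK N a < s"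
  proof (cases "m = 0")
    case True
    with N have "N = 2" by simp
    then show thesis
      using that[of "pi / 2"] MABK_2_pi_half assms(2) by simp
  next
    case False
    define g where "g = pi * (2 * (2 * m + 2) / (8 * m + 3))"
    have g_grid: "g = 2 * real (2 * m + 2) * pi / (real N + 1)"
      by (simp add: g_def N field_simps)
    have "MABK N g \<le> 0"
      unfolding g_grid by (rule MABK_grid_nonpos) (simp_all add: N)
    moreover have "pi / 2 \<le> g" "g \<le> 3 * pi / 4"
      using False by (simp_all add: g_def field_simps)
    ultimately show thesis
      using that[of g] assms(2) by simp
  qed
  then show ?thesis
    using G_set_components(2) assms(3)
    by (intro MABK_attains_near_theta_star[of "pi / 2" "3 * pi / 4" N a])
       (simp_all add: \<theta>_star field_simps add_pos_nonneg)
qed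

lemma MABK_attains_in_G_mod_8_eq_4:
  assumes "N mod 8 = 4" "1 < s" "s \<le> m_star N"
  shows "\<exists>\<theta>\<in>G_set. MABK N \<theta> = s"
proof (cases "N = 4 \<and> s \<le> 3 / 2")
  case True
  then show ?thesis
    using MABK_4_attains_in_G assms(2) by auto
next
  case small_excluded: False
  obtain m where N: "N = 8 * m + 4"
    using assms(1) by (metis mod_mult_div_eq add.commute)
  have \<theta>_star: "theta_star N = pi * (2 * (2 * m + 1) / (8 * m + 5))"
    using assms(1) by (simp add: theta_star_def t_N_def N field_simps)
  obtain a where "pi / 4 \<le> a" "a \<le> pi / 2" "MABK N a < s"
  proof (cases "m = 0")
    case True
    with N have "N = 4" by simp
    then show thesis
      using that[of "pi / 4"] MABK_4_pi_quarter small_excluded by simp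
  next
    case False
    define g where "g = pi * (2 * (2 * m) / (8 * m + 5))"
    have g_grid: "g = 2 * real (2 * m) * pi / (real N + 1)"
      by (simp add: g_def N field_simps)
    have "MABK N g \<le> 0"
      unfolding g_grid by (rule MABK_grid_nonpos) (simp_all add: N)
    moreover have "pi / 4 \<le> g" "g \<le> pi / 2"
      using False by (simp_all add: g_def field_simps)
    ultimately show thesis
      using that[of g] assms(2) by simp
  qed
  then show ?thesis
    using G_set_components(1) assms(3)
    by (intro MABK_attains_near_theta_star[of "pi / 4" "pi / 2" N a])
       (simp_all add: \<theta>_star field_simps add_pos_nonneg)
qed

lemma MABK_attains_in_G_mod_8_eq_6:
  assumes "N mod 8 = 6" "1 < s" "s \<le> m_star N"
  shows "\<exists>\<theta>\<in>G_set. MABK N \<theta> = s"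
proof -
  obtain m where N: "N = 8 * m + 6"
    using assms(1) by (metis mod_mult_div_eq add.commute)
  have \<theta>_star: "theta_star N = pi * (2 * (6 * m + 5) / (8 * m + 7))"
    using assms(1) by (simp add: theta_star_def t_N_def N field_simps)
  obtain a where "5 * pi / 4 \<le> a" "a \<le> 3 * pi / 2" "MABK N a < s"
  proof (cases "m = 0")
    case True
    with N have "N = 6" by simp
    then show thesis
      using that[of "5 * pi / 4"] MABK_6_five_pi_quarters_nonpos assms(2) by simp
  next
    case False
    define g where "g = pi * (2 * (6 * m + 4) / (8 * m + 7))"
    have g_grid: "g = 2 * real (6 * m + 4) * pi / (real N + 1)"
      by (simp add: g_def N field_simps)
    have "MABK N g \<le> 0"
      unfolding g_grid by (rule MABK_grid_nonpos) (simp_all add: N)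
    moreover have "5 * pi / 4 \<le> g" "g \<le> 3 * pi / 2"
      using False by (simp_all add: g_def field_simps)
    ultimately show thesis
      using that[of g] assms(2) by simp
  qed
  then show ?thesis
    using G_set_components(3) assms(3)
    by (intro MABK_attains_near_theta_star[of "5 * pi / 4" "3 * pi / 2" N a])
       (simp_all add: \<theta>_star field_simps add_pos_nonneg)
qed

lemma MABK_attains_in_G_mod_8_eq_0:
  assumes "N mod 8 = 0" "N \<noteq> 0" "1 < s" "s \<le> m_star N"
  shows "\<exists>\<theta>\<in>G_set. MABK N \<theta> = s"
proof -
  have "\<exists>m. N = 8 * m + 8"
    using assms(1,2) by presburger
  then obtain m where N: "N = 8 * m + 8" ..
  have \<theta>_star: "theta_star N = pi * (2 * (6 * m + 7) / (8 * m + 9))"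
    using assms(1) by (simp add: theta_star_def t_N_def N field_simps)
  obtain a where "3 * pi / 2 \<le> a" "a \<le> 7 * pi / 4" "MABK N a < s"
  proof (cases "m = 0")
    case True
    with N have "N = 8" by simp
    then show thesis
      using that[of "7 * pi / 4"] MABK_8_seven_pi_quarters_nonpos assms(3) by simp
  next
    case False
    define g where "g = pi * (2 * (6 * m + 8) / (8 * m + 9))"
    have g_grid: "g = 2 * real (6 * m + 8) * pi / (real N + 1)"
      by (simp add: g_def N field_simps)
    have "MABK N g \<le> 0"
      unfolding g_grid by (rule MABK_grid_nonpos) (simp_all add: N)
    moreover have "3 * pi / 2 \<le> g" "g \<le> 7 * pi / 4"
      using False by (simp_all add: g_def field_simps)
    ultimately show thesis
      using that[of g] assms(3) by simp
  qed
  then show ?thesis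
    using G_set_components(4) assms(4)
    by (intro MABK_attains_near_theta_star[of "3 * pi / 2" "7 * pi / 4" N a])
       (simp_all add: \<theta>_star field_simps add_pos_nonneg)
qed

theorem proposition4:
  fixes N :: nat and s :: real
  assumes "N \<ge> 2" and "even N"
    and "1 < s" and "s \<le> m_star N"
  shows "\<exists>\<theta>\<in>G_set. MABK N \<theta> = s"
proof -
  have "N mod 8 = 0 \<or> N mod 8 = 2 \<or> N mod 8 = 4 \<or> N mod 8 = 6"
    using \<open>even N\<close> by presburger
  then consider "N mod 8 = 0" | "N mod 8 = 2" | "N mod 8 = 4" | "N mod 8 = 6"
    by auto
  then show ?thesis
  proof cases
    case 1
    moreover have "N \<noteq> 0"
      using \<open>N \<ge> 2\<close> by simp
    ultimately show ?thesis
      using MABK_attains_in_G_mod_8_eq_0 assms(3,4) by presburger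
  next
    case 2
    then show ?thesis
      using MABK_attains_in_G_mod_8_eq_2 assms(3,4) by blast
  next
    case 3
    then show ?thesis
      using MABK_attains_in_G_mod_8_eq_4 assms(3,4) by blast
  next
    case 4
    then show ?thesis
      using MABK_attains_in_G_mod_8_eq_6 assms(3,4) by blast
  qed
qed

end
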